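(* For every $(a,b)\in P$ one has $N(a,b)\ge2$, and $N(a,b)=2$ if and only if $a=0$.
   Context: Let $P$ be the set of $(a,b)\in\mathbb{R}^2$ such that the polynomial $h(x)=x^2+ax+b$ has no multiple root and $h(x)>0$ for all real $x$ with $|x|\ge1$ (equivalently: $a^2<4b$, or $a^2>4b$ and $|a|<\min\{2,b+1\}$). For $(a,b)\in P$ let $C_{a,b}$ be the affine curve $y^2+(x^2-1)(x^2+ax+b)=0$ over $\mathbb{R}$, with coordinate ring $\mathbb{R}[C_{a,b}]=\mathbb{R}[x,y]/(y^2+(x^2-1)(x^2+ax+b))$. For $g=u(x)+v(x)y$ ($u,v\in\mathbb{R}[x]$) put $\delta(g)=\max\{\deg u,\deg v+2\}$, and for $0\ne g$ let $\theta(g)$ be the least integer $e\ge0$ with $g=\sum_i g_i^2$, $g_i\in\mathbb{R}[C_{a,b}]$, $\delta(g_i)\le e$. Define $N(a,b):=\theta(1-x^2)$ computed in $\mathbb{R}[C_{a,b}]$ (the stability constant of $C_{a,b}$). *)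

theory Defs
  imports "HOL-Computational_Algebra.Polynomial"
begin

text \<open>Bivariate real polynomials are represented as real poly poly:
  the outer variable is y, coefficients are polynomials in x.\<close>

definition hpoly :: "real \<Rightarrow> real \<Rightarrow> real poly" where
  "hpoly a b = [:b, a, 1:]"

definition P_set :: "(real \<times> real) set" where
  "P_set = {(a, b). rsquarefree (hpoly a b) \<and> (\<forall>x::real. \<bar>x\<bar> \<ge> 1 \<longrightarrow> poly (hpoly a b) x > 0)}"

definition curve_poly :: "real \<Rightarrow> real \<Rightarrow> real poly poly" where
  "curve_poly a b = [: [:-1, 0, 1:] * hpoly a b, 0, 1 :]"

text \<open>Every element of R[C] has a unique representative u(x) + v(x) y, written [:u, v:].
  delta of u + v y is max(deg u, deg v + 2), with deg 0 = -infinity; since only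
  comparisons with e >= 0 matter, the zero polynomial contributes 0.\<close>
definition delta :: "real poly \<Rightarrow> real poly \<Rightarrow> nat" where
  "delta u v = max (if u = 0 then 0 else degree u) (if v = 0 then 0 else degree v + 2)"

definition theta :: "real poly poly \<Rightarrow> real poly poly \<Rightarrow> nat" where
  "theta F g = (LEAST e. \<exists>gs :: (real poly \<times> real poly) list.
      F dvd (g - sum_list (map (\<lambda>(u, v). [:u, v:]^2) gs)) \<and>
      (\<forall>(u, v) \<in> set gs. delta u v \<le> e))"

definition N :: "real \<Rightarrow> real \<Rightarrow> nat" where
  "N a b = theta (curve_poly a b) [: [:1, 0, -1:] :]"

end

theory Submission
  imports Defs "HOL-Computational_Algebra.Fundamental_Theorem_Algebra"
begin

text \<open>
  Let h = x^2 + a x + b and C the curve y^2 = (1 - x^2) h.  Writing elements of R[C] as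
  u + v y, a representation 1 - x^2 = sum (u_i + v_i y)^2 amounts to sum u_i v_i = 0 and
  the identity sum u_i^2 = (1 - x^2) (1 - h sum v_i^2) in R[x].

  * N >= 2, since if all v_i = 0 then 1 - x^2 would be a sum of squares in R[x];
  * N = 2 forces the v_i to be constants; then sum u_i^2 = (1 - x^2)(1 - s h) is
    nonnegative, so +-1 are double roots, whence s h(1) = s h(-1) = 1 and a = 0;
  * for a = 0 the constant certificate (x^2 + b) + (1 - x^2) = 1 + b gives N <= 2.

  Since N is defined as a least element, we must also show that SOME representation
  exists.  It comes from a certificate h B + (1 - x^2) C = 1 with B, C nonnegative
  polynomials, hence sums of squares (univariate Hilbert theorem, proved first).  For
  a >= 0 we take B = (x - c)^m / K with m even and large, c balancing the values at
  +-1; for a < 0 we reflect x -> -x.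
\<close>

lemma poly_nonneg_at_isolated_point:
  fixes p :: "real poly"
  assumes "0 < d" and "\<And>x. x \<noteq> r \<Longrightarrow> \<bar>x - r\<bar> < d \<Longrightarrow> 0 \<le> poly p x"
  shows "0 \<le> poly p r"
proof (rule tendsto_lowerbound)
  show "(poly p \<longlongrightarrow> poly p r) (at r)"
    by (intro tendsto_intros)
  show "\<forall>\<^sub>F x in at r. 0 \<le> poly p x"
    unfolding eventually_at using assms by (auto simp: dist_real_def intro!: exI[of _ d])
qed simp

text \<open>If (x - r) q(x) is nonnegative everywhere, then q changes sign at r,
  hence q(r) = 0: a root of a nonnegative polynomial is a double root.\<close>

lemma linear_factor_of_nonneg_poly_vanishes:
  fixes q :: "real poly"
  assumes nonneg: "\<And>x. 0 \<le> poly ([:-r, 1:] * q) x"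
  shows "poly q r = 0"
proof -
  have lim: "(poly q \<longlongrightarrow> poly q r) (at r within S)" for S
    by (intro tendsto_intros)
  have factor: "0 \<le> (x - r) * poly q x" for x
    using nonneg[of x] by (simp add: algebra_simps)
  have "0 \<le> poly q x" if "r < x" for x
    using factor[of x] that by (simp add: zero_le_mult_iff)
  then have "0 \<le> poly q r"
    by (intro tendsto_lowerbound[OF lim[of "{r<..}"]]) (auto simp: eventually_at_right_field intro: gt_ex)
  moreover have "poly q x \<le> 0" if "x < r" for x
    using factor[of x] that by (simp add: zero_le_mult_iff)
  then have "poly q r \<le> 0"
    by (intro tendsto_upperbound[OF lim[of "{..<r}"]]) (auto simp: eventually_at_left_field intro: lt_ex)
  ultimately show ?thesis by simp
qed

text \<open>A nonnegative real polynomial attains its infimum: it tends to infinity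
  (in absolute value) outside a compact interval, on which it attains a minimum.\<close>

lemma nonneg_poly_attains_minimum:
  fixes p :: "real poly"
  assumes nonneg: "\<And>x. 0 \<le> poly p x"
  shows "\<exists>x0. \<forall>x. poly p x0 \<le> poly p x"
proof -
  obtain c p' where p: "p = pCons c p'" by (cases p)
  show ?thesis
  proof (cases "p' = 0")
    case True
    then show ?thesis using p by simp
  next
    case False
    obtain R where R: "\<And>x. R \<le> \<bar>x\<bar> \<Longrightarrow> poly p 0 + 1 \<le> \<bar>poly p x\<bar>"
      using poly_infinity[OF False, of "poly p 0 + 1" c] p by auto
    have "\<exists>M. (\<forall>x. -\<bar>R\<bar> \<le> x \<and> x \<le> \<bar>R\<bar> \<longrightarrow> M \<le> poly p x) \<and>
        (\<exists>x. -\<bar>R\<bar> \<le> x \<and> x \<le> \<bar>R\<bar> \<and> poly p x = M)"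
      by (intro isCont_eq_Lb) auto
    then obtain x0 where x0: "\<And>x. \<bar>x\<bar> \<le> \<bar>R\<bar> \<Longrightarrow> poly p x0 \<le> poly p x"
      by (metis abs_le_iff minus_le_iff)
    have "poly p x0 \<le> poly p x" for x
    proof (cases "\<bar>x\<bar> \<le> \<bar>R\<bar>")
      case False
      then have "poly p 0 + 1 \<le> poly p x" using R[of x] nonneg[of x] by auto
      moreover have "poly p x0 \<le> poly p 0" using x0[of 0] by simp
      ultimately show ?thesis by simp
    qed (rule x0)
    then show ?thesis by blast
  qed
qed

lemma nonneg_poly_double_root:
  fixes p :: "real poly"
  assumes nonneg: "\<And>x. 0 \<le> poly p x" and root: "poly p r = 0"
  shows "\<exists>q. p = [:-r, 1:] * [:-r, 1:] * q \<and> (\<forall>x. 0 \<le> poly q x)"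
proof -
  obtain p1 where p1: "p = [:-r, 1:] * p1"
    using root by (auto simp: poly_eq_0_iff_dvd elim: dvdE)
  have "poly p1 r = 0"
    using nonneg unfolding p1 by (rule linear_factor_of_nonneg_poly_vanishes)
  then obtain q where q: "p1 = [:-r, 1:] * q"
    by (auto simp: poly_eq_0_iff_dvd elim: dvdE)
  have pq: "p = [:-r, 1:] * [:-r, 1:] * q"
    using p1 q by (metis mult.assoc)
  have "0 \<le> poly q x" if "x \<noteq> r" for x
  proof -
    have "0 \<le> (x - r)^2 * poly q x"
      using nonneg[of x] pq by (simp add: power2_eq_square algebra_simps)
    moreover have "0 < (x - r)^2" using that by simp
    ultimately show ?thesis by (simp add: zero_le_mult_iff)
  qed
  then have "0 \<le> poly q x" for x
    using poly_nonneg_at_isolated_point[of 1 r q] by (cases "x = r") auto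
  with pq show ?thesis by blast
qed

text \<open>Induction on the degree: with M the minimum, attained at x0, we have
  p = M + (x - x0)^2 q with q nonnegative of smaller degree.\<close>

theorem nonneg_poly_sum_of_squares:
  fixes p :: "real poly"
  assumes "\<And>x. 0 \<le> poly p x"
  shows "\<exists>qs. p = sum_list (map (\<lambda>q. q * q) qs)"
  using assms
proof (induction "degree p" arbitrary: p rule: less_induct)
  case less
  show ?case
  proof (cases "degree p = 0")
    case True
    then obtain c where p: "p = [:c:]" by (auto elim: degree_eq_zeroE)
    have "0 \<le> c" using less.prems[of 0] p by simp
    then have "p = [:sqrt c:] * [:sqrt c:]" using p by simp
    then show ?thesis by (intro exI[of _ "[[:sqrt c:]]"]) simp
  next
    case False
    obtain x0 where min: "\<And>x. poly p x0 \<le> poly p x"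
      using nonneg_poly_attains_minimum less.prems by blast
    define M where "M = poly p x0"
    define l where "l = [:-x0, 1:]"
    have "\<And>x. 0 \<le> poly (p - [:M:]) x" "poly (p - [:M:]) x0 = 0"
      using min by (simp_all add: M_def)
    then obtain q where q: "p - [:M:] = l * l * q" "\<And>x. 0 \<le> poly q x"
      unfolding l_def using nonneg_poly_double_root by blast
    have "degree (p - [:M:]) = degree p"
      using False degree_add_eq_left[of "[:-M:]" p] by (simp add: diff_conv_add_uminus)
    moreover have "degree (l * l) = 2"
      unfolding l_def power2_eq_square[symmetric] by (rule degree_linear_power)
    moreover from this have "l * l \<noteq> 0" by auto
    ultimately have "degree p = 2 + degree q"
      using q(1) False by (metis degree_0 degree_mult_eq mult_zero_right)
    then have "degree q < degree p" by simp
    then obtain qs where qs: "q = sum_list (map (\<lambda>r. r * r) qs)"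
      using less.hyps q(2) by blast
    have "l * l * q = sum_list (map (\<lambda>r. r * r) (map ((*) l) qs))"
      unfolding qs by (induction qs) (simp_all add: algebra_simps)
    then have "p = sum_list (map (\<lambda>r. r * r) ([:sqrt M:] # map ((*) l) qs))"
      using q(1) less.prems[of x0] by (simp add: M_def algebra_simps)
    then show ?thesis by blast
  qed
qed

lemma poly_hpoly: "poly (hpoly a b) x = x^2 + a * x + b"
  by (simp add: hpoly_def power2_eq_square algebra_simps)

text \<open>Squares in R[C] in the coordinates u + v y (the reduction of y^2 happens
  later, through divisibility by the curve polynomial).\<close>

lemma sum_squares_in_curve_coords:
  fixes gs :: "(real poly \<times> real poly) list"
  shows "sum_list (map (\<lambda>(u, v). [:u, v:]^2) gs) =
     [: sum_list (map (\<lambda>g. fst g * fst g) gs), sum_list (map (\<lambda>g. 2 * fst g * snd g) gs),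
        sum_list (map (\<lambda>g. snd g * snd g) gs) :]"
proof (induction gs)
  case (Cons g gs)
  have "[:u, v:]^2 = [:u * u, 2 * u * v, v * v:]" for u v :: "real poly"
    by (simp add: power2_eq_square algebra_simps smult_add_right)
  with Cons show ?case by (simp split: prod.split)
qed simp

text \<open>Divisibility by the monic (in y) quadratic curve polynomial: a y-quadratic
  A0 + A1 y + A2 y^2 is congruent to the constant G exactly when A1 = 0 and
  G - A0 = A2 (1 - x^2) h, i.e. after substituting y^2 = (1 - x^2) h.\<close>

lemma curve_dvd_iff:
  fixes G A0 A1 A2 :: "real poly"
  shows "curve_poly a b dvd ([:G:] - [:A0, A1, A2:]) \<longleftrightarrow>
    A1 = 0 \<and> G - A0 = A2 * ([:1, 0, -1:] * hpoly a b)"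
proof
  let ?F = "curve_poly a b"
  assume "?F dvd ([:G:] - [:A0, A1, A2:])"
  then obtain Q where Q: "[:G:] - [:A0, A1, A2:] = ?F * Q" by (auto elim: dvdE)
  have "degree Q = 0"
  proof (rule ccontr)
    assume "degree Q \<noteq> 0"
    then have "degree (?F * Q) = 2 + degree Q"
      by (subst degree_mult_eq) (auto simp: curve_poly_def)
    moreover have "degree (?F * Q) \<le> 2"
      unfolding Q[symmetric] by (rule degree_diff_le) (auto intro: le_trans[OF degree_pCons_le])
    ultimately show False using \<open>degree Q \<noteq> 0\<close> by simp
  qed
  then obtain q where "Q = [:q:]" by (auto elim: degree_eq_zeroE)
  with Q have "[:G - A0, - A1, - A2:] = [:q * ([:-1, 0, 1:] * hpoly a b), 0, q:]"
    by (simp add: curve_poly_def mult.commute)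
  then show "A1 = 0 \<and> G - A0 = A2 * ([:1, 0, -1:] * hpoly a b)"
    by (auto simp: algebra_simps)
next
  assume "A1 = 0 \<and> G - A0 = A2 * ([:1, 0, -1:] * hpoly a b)"
  then have "[:G:] - [:A0, A1, A2:] = curve_poly a b * [:-A2:]"
    by (simp add: curve_poly_def algebra_simps)
  then show "curve_poly a b dvd ([:G:] - [:A0, A1, A2:])" by (metis dvd_triv_left)
qed

definition sos_repr_bounded :: "real \<Rightarrow> real \<Rightarrow> nat \<Rightarrow> bool" where
  "sos_repr_bounded a b e \<longleftrightarrow> (\<exists>gs :: (real poly \<times> real poly) list.
      curve_poly a b dvd ([: [:1, 0, -1:] :] - sum_list (map (\<lambda>(u, v). [:u, v:]^2) gs)) \<and>
      (\<forall>(u, v) \<in> set gs. delta u v \<le> e))"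

lemma N_eq_Least: "N a b = (LEAST e. sos_repr_bounded a b e)"
  by (simp add: N_def theta_def sos_repr_bounded_def)

lemma sos_repr_bounded_identity:
  assumes "sos_repr_bounded a b e"
  obtains gs :: "(real poly \<times> real poly) list"
  where "\<forall>(u, v) \<in> set gs. delta u v \<le> e"
    and "sum_list (map (\<lambda>g. fst g * fst g) gs) =
         [:1, 0, -1:] * (1 - sum_list (map (\<lambda>g. snd g * snd g) gs) * hpoly a b)"
proof -
  from assms obtain gs where dvd: "curve_poly a b dvd
      ([: [:1, 0, -1:] :] - sum_list (map (\<lambda>(u, v). [:u, v:]^2) gs))"
    and bound: "\<forall>(u, v) \<in> set gs. delta u v \<le> e"
    unfolding sos_repr_bounded_def by blast
  from dvd have "[:1, 0, -1:] - sum_list (map (\<lambda>g. fst g * fst g) gs) =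
      sum_list (map (\<lambda>g. snd g * snd g) gs) * ([:1, 0, -1:] * hpoly a b)"
    unfolding sum_squares_in_curve_coords curve_dvd_iff by blast
  moreover have "A = G * (1 - B * h)" if "G - A = B * (G * h)" for G A B h :: "real poly"
    using that by (simp add: algebra_simps)
  ultimately have "sum_list (map (\<lambda>g. fst g * fst g) gs) =
      [:1, 0, -1:] * (1 - sum_list (map (\<lambda>g. snd g * snd g) gs) * hpoly a b)"
    by blast
  with bound show ?thesis using that by blast
qed

lemma poly_sum_squares_nonneg:
  fixes f :: "'a \<Rightarrow> real poly"
  shows "0 \<le> poly (sum_list (map (\<lambda>g. f g * f g) gs)) x"
  by (induction gs) simp_all

text \<open>Lower bound N >= 2: with e < 2 all v_i vanish, so 1 - x^2 would be a sum
  of squares of polynomials, which is false at x = 2.\<close>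

lemma sos_repr_bounded_ge_2:
  assumes "sos_repr_bounded a b e"
  shows "2 \<le> e"
proof (rule ccontr)
  assume small: "\<not> 2 \<le> e"
  obtain gs :: "(real poly \<times> real poly) list"
    where bound: "\<forall>(u, v) \<in> set gs. delta u v \<le> e"
      and eq: "sum_list (map (\<lambda>g. fst g * fst g) gs) =
               [:1, 0, -1:] * (1 - sum_list (map (\<lambda>g. snd g * snd g) gs) * hpoly a b)"
    using assms by (rule sos_repr_bounded_identity)
  have "\<forall>g \<in> set gs. snd g = 0"
    using bound small by (auto simp: delta_def split: if_splits)
  then have "sum_list (map (\<lambda>g. snd g * snd g) gs) = 0"
    by (induction gs) auto
  with eq have "poly (sum_list (map (\<lambda>g. fst g * fst g) gs)) 2 = -3"
    by simp
  with poly_sum_squares_nonneg[of fst gs 2] show False by simp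
qed

text \<open>With e = 2 all v_i are constants, so sum u_i^2 = (1 - x^2)(1 - s h) is
  nonnegative; the roots +-1 must be double roots, giving s h(1) = 1 = s h(-1),
  i.e. a = 0.\<close>

lemma sos_repr_bounded_2_imp_a_zero:
  assumes "sos_repr_bounded a b 2"
  shows "a = 0"
proof -
  obtain gs :: "(real poly \<times> real poly) list"
    where bound: "\<forall>(u, v) \<in> set gs. delta u v \<le> 2"
      and eq: "sum_list (map (\<lambda>g. fst g * fst g) gs) =
               [:1, 0, -1:] * (1 - sum_list (map (\<lambda>g. snd g * snd g) gs) * hpoly a b)"
    using assms by (rule sos_repr_bounded_identity)
  have "\<forall>g \<in> set gs. degree (snd g) = 0"
    using bound by (auto simp: delta_def split: if_splits)
  then have "degree (sum_list (map (\<lambda>g. snd g * snd g) gs)) = 0"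
    by (intro le_zero_eq[THEN iffD1] degree_sum_list_le) (auto simp: degree_mult_eq_0)
  then obtain s where s: "sum_list (map (\<lambda>g. snd g * snd g) gs) = [:s:]"
    by (rule degree_eq_zeroE)
  define r where "r = 1 - smult s (hpoly a b)"
  have nonneg: "0 \<le> poly ([:1, 0, -1:] * r) x" for x
    using poly_sum_squares_nonneg[of fst gs x] eq s by (simp add: r_def)
  have "[:1, 0, -1:] * r = [:-1, 1:] * ([:-1, -1:] * r)"
    and "[:1, 0, -1:] * r = [:-(-1), 1:] * ([:1, -1:] * r)"
    by (simp_all add: algebra_simps)
  then have "poly ([:-1, -1:] * r) 1 = 0" and "poly ([:1, -1:] * r) (-1) = 0"
    using nonneg by (metis linear_factor_of_nonneg_poly_vanishes)+
  then have "s * (1 + a + b) = 1" and "s * (1 - a + b) = 1"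
    by (simp_all add: r_def hpoly_def algebra_simps)
  then have "s * (1 + a + b) = s * (1 - a + b)" and "s \<noteq> 0"
    by auto
  then show "a = 0" by simp
qed

text \<open>Certificates give representations: if h W + (1 - x^2) C = 1 with W, C
  sums of squares, then 1 - x^2 = (1 - x^2)^2 C + W (1 - x^2) h, i.e. the sum of
  the squares ((1 - x^2) c)^2 and (w y)^2 in R[C].\<close>

lemma sos_repr_bounded_of_certificate:
  fixes ws cs :: "real poly list"
  assumes cert: "hpoly a b * sum_list (map (\<lambda>w. w * w) ws) +
                 [:1, 0, -1:] * sum_list (map (\<lambda>c. c * c) cs) = 1"
    and deg_ws: "\<forall>w \<in> set ws. degree w + 2 \<le> e"
    and deg_cs: "\<forall>c \<in> set cs. degree c + 2 \<le> e"
  shows "sos_repr_bounded a b e"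
proof -
  define g :: "real poly" where "g = [:1, 0, -1:]"
  define W where "W = sum_list (map (\<lambda>w. w * w) ws)"
  define C where "C = sum_list (map (\<lambda>c. c * c) cs)"
  define gs where "gs = map (\<lambda>c. (g * c, 0)) cs @ map (\<lambda>w. (0, w)) ws"
  have "sum_list (map (\<lambda>c. g * c * (g * c)) cs) = g * g * C"
    unfolding C_def by (induction cs) (simp_all add: algebra_simps)
  then have squares: "sum_list (map (\<lambda>(u, v). [:u, v:]^2) gs) = [:g * g * C, 0, W:]"
    unfolding sum_squares_in_curve_coords by (simp add: gs_def W_def o_def)
  have "g = g * (hpoly a b * W + g * C)"
    using cert by (simp add: g_def W_def C_def)
  then have "g - g * g * C = W * (g * hpoly a b)"
    by (simp add: algebra_simps)
  then have "curve_poly a b dvd ([:g:] - sum_list (map (\<lambda>(u, v). [:u, v:]^2) gs))"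
    unfolding squares curve_dvd_iff g_def[symmetric] by blast
  moreover have "delta u v \<le> e" if mem: "(u, v) \<in> set gs" for u v
  proof -
    consider c where "c \<in> set cs" "u = g * c" "v = 0" | w where "w \<in> set ws" "u = 0" "v = w"
      using mem unfolding gs_def by auto
    then show ?thesis
    proof cases
      case (1 c)
      have "degree (g * c) \<le> degree c + 2"
        using degree_mult_le[of g c] by (simp add: g_def)
      with 1 deg_cs show ?thesis by (auto simp: delta_def)
    qed (use deg_ws in \<open>auto simp: delta_def\<close>)
  qed
  ultimately show ?thesis
    unfolding sos_repr_bounded_def g_def by blast
qed

text \<open>Choice of the centre c of the weight (x - c)^m: it balances the values of
  the weighted quadratic at x = 1 and x = -1.\<close>

lemma balance_point_exists:
  fixes l r :: real and m :: nat
  assumes "0 < l" "l \<le> r" "0 < m"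
  shows "\<exists>c. 0 \<le> c \<and> c < 1 \<and> r * (1 - c)^m = l * (1 + c)^m"
proof -
  define q where "q = root m (l / r)"
  have q_pos: "0 < q" and q_pow: "q ^ m = l / r"
    using assms by (simp_all add: q_def real_root_pow_pos)
  have "q \<le> 1"
    using assms by (simp add: q_def)
  define c where "c = (1 - q) / (1 + q)"
  define s where "s = 2 / (1 + q)"
  have "1 - c = q * s" and "1 + c = s"
    using q_pos by (simp_all add: c_def s_def field_simps)
  then have "r * (1 - c)^m = r * q^m * s^m" and "(1 + c)^m = s^m"
    by (simp_all add: power_mult_distrib)
  moreover have "r * q^m = l"
    using assms q_pow by simp
  moreover have "0 \<le> c" "c < 1"
    using q_pos \<open>q \<le> 1\<close> by (simp_all add: c_def)
  ultimately show ?thesis by auto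
qed

text \<open>The four estimates below compare h(x) (x - c)^m (m even) with its common
  value K at x = +-1; here h is increasing and |x - c| <= 1 - c.\<close>

lemma weighted_quadratic_le_right:
  fixes a b c x :: real and m :: nat
  assumes "0 \<le> a" "0 \<le> c" "even m" "0 \<le> 1 + a + b" "2 * c - 1 \<le> x" "x \<le> 1"
  shows "(x^2 + a * x + b) * (x - c)^m \<le> (1 + a + b) * (1 - c)^m"
proof (rule mult_mono)
  have "(1 + a + b) - (x^2 + a * x + b) = (1 - x) * (1 + x + a)"
    by (simp add: power2_eq_square algebra_simps)
  moreover have "0 \<le> (1 - x) * (1 + x + a)"
    using assms by simp
  ultimately show "x^2 + a * x + b \<le> 1 + a + b" by linarith
  have "\<bar>x - c\<bar>^m \<le> (1 - c)^m"
    using assms by (intro power_mono) (auto simp: abs_le_iff)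
  then show "(x - c)^m \<le> (1 - c)^m"
    using \<open>even m\<close> by (simp add: power_even_abs)
qed (use assms in \<open>simp_all add: zero_le_even_power\<close>)

text \<open>Right of 1 both factors are at least their values at x = 1.\<close>

lemma weighted_quadratic_ge_right:
  fixes a b c x :: real and m :: nat
  assumes "0 \<le> a" "c < 1" "0 \<le> 1 + a + b" "1 \<le> x"
  shows "(1 + a + b) * (1 - c)^m \<le> (x^2 + a * x + b) * (x - c)^m"
proof -
  have "(x^2 + a * x + b) - (1 + a + b) = (x - 1) * (x + 1 + a)"
    by (simp add: power2_eq_square algebra_simps)
  moreover have "0 \<le> (x - 1) * (x + 1 + a)"
    using assms by simp
  ultimately have "1 + a + b \<le> x^2 + a * x + b" by linarith
  moreover have "(1 - c)^m \<le> (x - c)^m"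
    using assms by (intro power_mono) simp_all
  ultimately show ?thesis
    using assms by (intro mult_mono) simp_all
qed

lemma one_minus_power_times_bernoulli_le_one:
  fixes u :: real and m :: nat
  assumes "0 \<le> u" "u \<le> 1"
  shows "(1 - u)^m * (1 + real m * u) \<le> 1"
proof -
  have "(1 - u)^m * (1 + real m * u) \<le> (1 - u)^m * (1 + u)^m"
    using assms by (intro mult_left_mono Bernoulli_inequality) simp_all
  also have "\<dots> = (1 - u^2)^m"
    by (simp add: power2_eq_square power_mult_distrib[symmetric] algebra_simps)
  also have "\<dots> \<le> 1"
    using assms by (intro power_le_one) (simp_all add: power_le_one)
  finally show ?thesis .
qed

text \<open>Near x = -1 inside the interval, the loss in h is absorbed by the decay of
  (x - c)^m provided m is large compared with a / h(-1).\<close>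

lemma weighted_quadratic_le_left:
  fixes a b c x :: real and m :: nat
  assumes c: "0 \<le> c" "c < 1" and "even m" and h_left: "0 \<le> 1 - a + b"
    and m_large: "(1 + c) * a \<le> real m * (1 - a + b)"
    and x: "-1 \<le> x" "x \<le> 2 * c - 1"
  shows "(x^2 + a * x + b) * (x - c)^m \<le> (1 - a + b) * (1 + c)^m"
proof -
  define y where "y = 1 + x"
  define u where "u = y / (1 + c)"
  have y: "0 \<le> y" "y \<le> 2 * c"
    using x by (simp_all add: y_def)
  then have u: "0 \<le> u" "u \<le> 1"
    using c by (simp_all add: u_def field_simps)
  have "c - x = (1 + c) * (1 - u)"
    using c by (simp add: u_def y_def field_simps)
  then have power_eq: "(x - c)^m = (1 + c)^m * (1 - u)^m"
    using \<open>even m\<close> by (metis minus_diff_eq power_minus_even power_mult_distrib)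
  have "x^2 + a * x + b = (1 - a + b) + y * (y - 2) + u * ((1 + c) * a)"
    using c by (simp add: u_def y_def power2_eq_square field_simps)
  also have "\<dots> \<le> (1 - a + b) + 0 + u * (real m * (1 - a + b))"
    using y c u m_large by (intro add_mono mult_left_mono) (simp_all add: mult_nonneg_nonpos)
  finally have h_le: "x^2 + a * x + b \<le> (1 - a + b) * (1 + real m * u)"
    by (simp add: algebra_simps)
  have "(x^2 + a * x + b) * (x - c)^m = (1 + c)^m * ((x^2 + a * x + b) * (1 - u)^m)"
    by (simp add: power_eq)
  also have "\<dots> \<le> (1 + c)^m * ((1 - a + b) * (1 + real m * u) * (1 - u)^m)"
    using h_le c u by (intro mult_left_mono mult_right_mono) simp_all
  also have "\<dots> = (1 + c)^m * ((1 - a + b) * ((1 - u)^m * (1 + real m * u)))"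
    by (simp only: mult_ac)
  also have "\<dots> \<le> (1 + c)^m * ((1 - a + b) * 1)"
    using c u h_left
    by (intro mult_left_mono one_minus_power_times_bernoulli_le_one) simp_all
  finally show ?thesis by (simp add: mult.commute)
qed

text \<open>Left of -1 the growth of (x - c)^m dominates the possible decrease of h,
  provided m is large compared with a / min h.\<close>

lemma weighted_quadratic_ge_left:
  fixes a b c x :: real and m :: nat
  assumes c: "0 \<le> c" "c < 1" and "even m" and x: "x \<le> -1"
    and h_pos: "0 < x^2 + a * x + b"
    and m_large: "2 < a \<Longrightarrow> 2 * a \<le> real m * (b - a^2 / 4)"
  shows "(1 - a + b) * (1 + c)^m \<le> (x^2 + a * x + b) * (x - c)^m"
proof -
  define hx where "hx = x^2 + a * x + b"
  define y where "y = -1 - x"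
  define u where "u = y / (1 + c)"
  have y: "0 \<le> y" and u: "0 \<le> u"
    using x c by (simp_all add: y_def u_def)
  have "c - x = (1 + c) * (1 + u)"
    using c by (simp add: u_def y_def field_simps)
  then have power_eq: "(x - c)^m = (1 + c)^m * (1 + u)^m"
    using \<open>even m\<close> by (metis minus_diff_eq power_minus_even power_mult_distrib)
  have slope: "(1 + c) * (a - 2 - y) \<le> real m * hx"
  proof (cases "2 < a")
    case True
    have "hx = (x + a / 2)^2 + (b - a^2 / 4)"
      by (simp add: hx_def power2_eq_square field_simps)
    then have "b - a^2 / 4 \<le> hx" by simp
    have "c * (a - 2 - y) \<le> c * a" and "c * a \<le> 1 * a"
      using c y True by (intro mult_left_mono mult_right_mono; simp)+
    then have "(1 + c) * (a - 2 - y) \<le> 2 * a"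
      using y by (simp add: algebra_simps)
    also have "\<dots> \<le> real m * hx"
      using m_large[OF True] \<open>b - a^2 / 4 \<le> hx\<close> by (meson mult_left_mono of_nat_0_le_iff order_trans)
    finally show ?thesis .
  next
    case False
    then have "(1 + c) * (a - 2 - y) \<le> 0"
      using c y by (intro mult_nonneg_nonpos) simp_all
    also have "0 \<le> real m * hx"
      using h_pos by (simp add: hx_def)
    finally show ?thesis .
  qed
  have "1 - a + b = hx + u * ((1 + c) * (a - 2 - y))"
    using c by (simp add: hx_def u_def y_def power2_eq_square field_simps)
  also have "\<dots> \<le> hx + u * (real m * hx)"
    using slope u by (simp add: mult_left_mono)
  also have "\<dots> = hx * (1 + real m * u)"
    by (simp add: algebra_simps)
  also have "\<dots> \<le> hx * (1 + u)^m"
    using h_pos u by (intro mult_left_mono Bernoulli_inequality) (simp_all add: hx_def)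
  finally have "(1 + c)^m * (1 - a + b) \<le> (1 + c)^m * (hx * (1 + u)^m)"
    using c by (intro mult_left_mono) simp_all
  then show ?thesis
    by (simp add: power_eq hx_def algebra_simps)
qed

text \<open>A nonnegative weight B with h B <= 1 on [-1,1] and h B >= 1 outside yields
  a certificate: 1 - h B vanishes at +-1, and its quotient by 1 - x^2 is nonnegative.\<close>

lemma certificate_from_separating_weight:
  fixes h B :: "real poly"
  assumes inside: "\<And>x. \<bar>x\<bar> \<le> 1 \<Longrightarrow> poly h x * poly B x \<le> 1"
    and outside: "\<And>x. 1 \<le> \<bar>x\<bar> \<Longrightarrow> 1 \<le> poly h x * poly B x"
  shows "\<exists>C. (\<forall>x. 0 \<le> poly C x) \<and> h * B + [:1, 0, -1:] * C = 1"
proof -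
  define R where "R = 1 - h * B"
  have "poly R 1 = 0"
    using inside[of 1] outside[of 1] by (simp add: R_def)
  then obtain R1 where R1: "R = [:-1, 1:] * R1"
    by (auto simp: poly_eq_0_iff_dvd elim: dvdE)
  have "poly R (-1) = 0"
    using inside[of "-1"] outside[of "-1"] by (simp add: R_def)
  then have "poly R1 (-1) = 0"
    by (simp add: R1)
  then obtain C1 where C1: "R1 = [:1, 1:] * C1"
    by (auto simp: poly_eq_0_iff_dvd elim: dvdE)
  define C where "C = - C1"
  have R_eq: "R = [:1, 0, -1:] * C"
    by (simp add: R1 C1 C_def algebra_simps)
  have poly_R: "poly R x = (1 - x^2) * poly C x" for x
    by (simp add: R_eq power2_eq_square algebra_simps)
  have off_circle: "0 \<le> poly C x" if "\<bar>x\<bar> \<noteq> 1" for x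
  proof (cases "\<bar>x\<bar> < 1")
    case True
    then have "0 < 1 - x^2" and "0 \<le> poly R x"
      using inside[of x] by (simp_all add: R_def abs_square_less_1)
    then show ?thesis by (simp add: poly_R zero_le_mult_iff)
  next
    case False
    then have "1 < \<bar>x\<bar>" using that by simp
    then have "1 < x^2"
      using one_less_power[of "\<bar>x\<bar>" 2] by simp
    then have "1 - x^2 < 0" and "poly R x \<le> 0"
      using outside[of x] \<open>1 < \<bar>x\<bar>\<close> by (simp_all add: R_def)
    then show ?thesis by (simp add: poly_R mult_le_0_iff)
  qed
  have "0 \<le> poly C x" for x
  proof (cases "\<bar>x\<bar> = 1")
    case True
    have near: "0 \<le> poly C y" if "y \<noteq> x" "\<bar>y - x\<bar> < 1" for y
      by (rule off_circle) (use that True in linarith)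
    show ?thesis
      by (rule poly_nonneg_at_isolated_point[of 1]) (simp_all add: near)
  qed (rule off_circle)
  moreover have "h * B + [:1, 0, -1:] * C = 1"
    using R_eq by (simp add: R_def algebra_simps)
  ultimately show ?thesis by blast
qed

text \<open>For a >= 0 such a weight is (x - c)^m / K with m even and large and c
  from the balancing condition.\<close>

lemma separating_weight_exists:
  fixes a b :: real
  assumes a_nonneg: "0 \<le> a" and h_pos: "\<And>x. 1 \<le> \<bar>x\<bar> \<Longrightarrow> 0 < x^2 + a * x + b"
  shows "\<exists>B. (\<forall>x. 0 \<le> poly B x) \<and>
    (\<forall>x. \<bar>x\<bar> \<le> 1 \<longrightarrow> poly (hpoly a b) x * poly B x \<le> 1) \<and>
    (\<forall>x. 1 \<le> \<bar>x\<bar> \<longrightarrow> 1 \<le> poly (hpoly a b) x * poly B x)"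
proof -
  have h_left: "0 < 1 - a + b" and h_right: "0 < 1 + a + b"
    using h_pos[of "-1"] h_pos[of 1] by simp_all
  define \<delta> where "\<delta> = b - a^2 / 4"
  have \<delta>_pos: "0 < \<delta>" if "2 < a"
    using h_pos[of "-a/2"] that by (simp add: \<delta>_def power2_eq_square field_simps)
  obtain n :: nat where n: "max (a / (1 - a + b)) (a / \<delta>) < n"
    using reals_Archimedean2 by blast
  define m where "m = 2 * n"
  have "0 \<le> a / (1 - a + b)"
    using a_nonneg h_left by simp
  then have "0 < n"
    using n by (metis le_less_trans max.strict_boundedE of_nat_0_less_iff)
  then have m: "0 < m" "even m" by (simp_all add: m_def)
  have m_large: "2 * a \<le> real m * (1 - a + b)"
    using n h_left by (simp add: m_def divide_less_eq)
  have m_large_vertex: "2 * a \<le> real m * (b - a^2 / 4)" if "2 < a"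
    using n \<delta>_pos[OF that] by (simp add: m_def \<delta>_def[symmetric] divide_less_eq)
  obtain c where c: "0 \<le> c" "c < 1" and balanced: "(1 + a + b) * (1 - c)^m = (1 - a + b) * (1 + c)^m"
    using balance_point_exists[of "1 - a + b" "1 + a + b" m] h_left a_nonneg m by auto
  define K where "K = (1 - a + b) * (1 + c)^m"
  have "0 < K" using h_left c by (simp add: K_def)
  define B where "B = smult (1 / K) ([:-c, 1:]^m)"
  have weight: "poly (hpoly a b) x * poly B x = (x^2 + a * x + b) * (x - c)^m / K" for x
    by (simp add: B_def hpoly_def power2_eq_square algebra_simps add_divide_distrib)
  have "(1 + c) * a \<le> real m * (1 - a + b)"
    using mult_right_mono[of "1 + c" 2 a] m_large c a_nonneg by simp
  then have inside: "(x^2 + a * x + b) * (x - c)^m \<le> K" if "\<bar>x\<bar> \<le> 1" for x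
    using that weighted_quadratic_le_left[of c m a b x] weighted_quadratic_le_right[of a c m b x]
      c m h_left h_right a_nonneg balanced by (cases "x \<le> 2 * c - 1") (auto simp: K_def abs_le_iff)
  have outside: "K \<le> (x^2 + a * x + b) * (x - c)^m" if "1 \<le> \<bar>x\<bar>" for x
    using that weighted_quadratic_ge_left[of c m x a b] weighted_quadratic_ge_right[of a c b x m]
      c m h_pos[OF that] h_right a_nonneg balanced m_large_vertex
    by (cases "1 \<le> x") (auto simp: K_def abs_if split: if_splits)
  have "0 \<le> poly B x" for x
    using \<open>0 < K\<close> m by (simp add: B_def zero_le_even_power)
  with inside outside \<open>0 < K\<close> show ?thesis
    by (intro exI[of _ B]) (simp add: weight divide_le_eq_1_pos le_divide_eq_1_pos)
qed

text \<open>Positivstellensatz-type certificate h B + (1 - x^2) C = 1 with B, C >= 0;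
  the case a < 0 reduces to a > 0 by the reflection x -> -x.\<close>

lemma nonneg_certificate_exists:
  assumes "(a, b) \<in> P_set"
  shows "\<exists>B C. (\<forall>x. 0 \<le> poly B x) \<and> (\<forall>x. 0 \<le> poly C x) \<and>
           hpoly a b * B + [:1, 0, -1:] * C = 1"
proof -
  have certificate: "\<exists>B C. (\<forall>x. 0 \<le> poly B x) \<and> (\<forall>x. 0 \<le> poly C x) \<and>
           hpoly a' b * B + [:1, 0, -1:] * C = 1"
    if "0 \<le> a'" "\<And>x. 1 \<le> \<bar>x\<bar> \<Longrightarrow> 0 < x^2 + a' * x + b" for a'
    using separating_weight_exists[OF that] certificate_from_separating_weight by meson
  have h_pos: "0 < x^2 + a * x + b" if "1 \<le> \<bar>x\<bar>" for x
    using assms that by (simp add: P_set_def poly_hpoly)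
  show ?thesis
  proof (cases "0 \<le> a")
    case True
    then show ?thesis using certificate h_pos by blast
  next
    case False
    have "0 < x^2 + (-a) * x + b" if "1 \<le> \<bar>x\<bar>" for x
      using h_pos[of "-x"] that by simp
    then obtain B C where B: "\<forall>x. 0 \<le> poly B x" and C: "\<forall>x. 0 \<le> poly C x"
      and identity: "hpoly (-a) b * B + [:1, 0, -1:] * C = 1"
      using certificate[of "-a"] False by auto
    let ?reflect = "\<lambda>p. pcompose p [:0, -1:]"
    have "?reflect (hpoly (-a) b) = hpoly a b" and "?reflect [:1, 0, -1:] = [:1, 0, -1::real:]"
      by (simp_all add: hpoly_def pcompose_pCons)
    then have "hpoly a b * ?reflect B + [:1, 0, -1:] * ?reflect C =
        ?reflect (hpoly (-a) b * B + [:1, 0, -1:] * C)"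
      by (simp only: pcompose_add pcompose_mult)
    then have "hpoly a b * ?reflect B + [:1, 0, -1:] * ?reflect C = 1"
      using identity by (simp add: pcompose_1)
    moreover have "\<forall>x. 0 \<le> poly (?reflect B) x" "\<forall>x. 0 \<le> poly (?reflect C) x"
      using B C by (simp_all add: poly_pcompose)
    ultimately show ?thesis by blast
  qed
qed

lemma sos_repr_bounded_exists:
  assumes "(a, b) \<in> P_set"
  shows "\<exists>e. sos_repr_bounded a b e"
proof -
  obtain B C where B: "\<forall>x. 0 \<le> poly B x" and C: "\<forall>x. 0 \<le> poly C x"
    and identity: "hpoly a b * B + [:1, 0, -1:] * C = 1"
    using nonneg_certificate_exists[OF assms] by blast
  obtain ws cs where "B = sum_list (map (\<lambda>w. w * w) ws)" "C = sum_list (map (\<lambda>c. c * c) cs)"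
    using nonneg_poly_sum_of_squares B C by metis
  moreover define e where "e = sum_list (map degree (ws @ cs)) + 2"
  moreover have "degree p + 2 \<le> e" if "p \<in> set (ws @ cs)" for p
  proof -
    have "degree p \<le> sum_list (map degree (ws @ cs))"
      using that by (intro member_le_sum_list) auto
    then show ?thesis by (simp add: e_def)
  qed
  ultimately have "sos_repr_bounded a b e"
    using identity by (intro sos_repr_bounded_of_certificate) auto
  then show ?thesis by blast
qed

text \<open>For a = 0 the constant certificate (x^2 + b) + (1 - x^2) = 1 + b gives
  a representation with e = 2.\<close>

lemma sos_repr_bounded_2_if_a_zero:
  assumes "0 < 1 + b"
  shows "sos_repr_bounded 0 b 2"
proof -
  define s where "s = 1 / sqrt (1 + b)"
  have "s * s * (1 + b) = 1"
    using assms by (simp add: s_def real_sqrt_mult[symmetric])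
  then have "hpoly 0 b * ([:s:] * [:s:]) + [:1, 0, -1:] * ([:s:] * [:s:]) = 1"
    by (simp add: hpoly_def one_pCons algebra_simps)
  then show ?thesis
    by (intro sos_repr_bounded_of_certificate[where ws = "[[:s:]]" and cs = "[[:s:]]"]) simp_all
qed

theorem mainTheorem12:
  fixes a b :: real
  assumes "(a, b) \<in> P_set"
  shows "N a b \<ge> 2 \<and> (N a b = 2 \<longleftrightarrow> a = 0)"
proof -
  have attained: "sos_repr_bounded a b (N a b)"
    unfolding N_eq_Least using sos_repr_bounded_exists[OF assms] by (rule LeastI_ex)
  then have lower: "2 \<le> N a b"
    by (rule sos_repr_bounded_ge_2)
  have "N a b \<le> 2" if "a = 0"
  proof -
    have "0 < 1 + b"
      using assms that by (auto simp: P_set_def poly_hpoly dest: spec[of _ 1])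
    then show ?thesis
      unfolding N_eq_Least using that sos_repr_bounded_2_if_a_zero by (simp add: Least_le)
  qed
  moreover have "a = 0" if "N a b = 2"
    using attained that sos_repr_bounded_2_imp_a_zero by simp
  ultimately show ?thesis
    using lower by auto
qed

end
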